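(* Let $U$ be a Hilbert space, $H: U\rightrightarrows U$ with $H^{-1}(0)\neq\emptyset$, and for each $i\in\mathbb{N}$ let $\widetilde H_{i+1}: U\rightrightarrows U$ and $M_{i+1}, Z_{i+1}, P_{i+1}\in\mathcal{L}(U;U)$ with $Z_{i+1}M_{i+1}$ self-adjoint and $Z_{i+1}M_{i+1}\ge0$. Let $(u^i)_{i\in\mathbb{N}}\subset U$ satisfy $0\in\widetilde H_{i+1}(u^{i+1}) + M_{i+1}(u^{i+1}-u^i)$ for all $i$. Let $\delta\in[0,1]$ and suppose that for all $i$, $Z_{i+2}M_{i+2}\ge Z_{i+1}P_{i+1}$ and the partial error bound \[ \delta\|u^{i+1}-u^i\|^2_{Z_{i+1}M_{i+1}} + \operatorname{dist}^2_{Z_{i+2}M_{i+2}-Z_{i+1}P_{i+1}}(u^{i+1}, H^{-1}(0)) \ge \operatorname{dist}^2_{Z_{i+2}M_{i+2}}(u^{i+1},H^{-1}(0)) \] holds. Suppose further that for every $i$ there is $\Delta_{i+1}\in\mathbb{R}$ such that for all $u^*\in H^{-1}(0)$ and all $q\in\widetilde H_{i+1}(u^{i+1})$, \[ \tfrac{1-\delta}{2}\|u^{i+1}-u^i\|^2_{Z_{i+1}M_{i+1}} + \tfrac12\|u^{i+1}-u^*\|^2_{Z_{i+1}(M_{i+1}+P_{i+1})-Z_{i+2}M_{i+2}} + \langle q, u^{i+1}-u^*\rangle_{Z_{i+1}} \ge -\Delta_{i+1}. \] Then for all $N\ge1$, \[ \tfrac12 \operatorname{dist}^2_{Z_{N+1}M_{N+1}}(u^N,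 H^{-1}(0)) \le \tfrac12 \operatorname{dist}^2_{Z_1M_1}(u^0, H^{-1}(0)) + \sum_{i=0}^{N-1}\Delta_{i+1}. \]
   Context: For $T\in\mathcal{L}(U;U)$ (bounded linear, not necessarily self-adjoint): $\langle x,z\rangle_T:=\langle Tx,z\rangle$, $\|x\|_T^2:=\langle Tx,x\rangle$, $\operatorname{dist}_T^2(z,A):=\inf_{u\in A}\|z-u\|_T^2$; $T\ge S$ means $T-S$ positive semidefinite. $H^{-1}(0):=\{u: 0\in H(u)\}$. *)

theory Defs
  imports "HOL-Analysis.Analysis"
begin

text \<open>Real Hilbert space: type class real_inner + complete_space.
  Operators in L(U;U): functions with bounded_linear. Set-valued maps: 'a \<Rightarrow> 'a set.\<close>

definition tinner :: "('a::real_inner \<Rightarrow> 'a) \<Rightarrow> 'a \<Rightarrow> 'a \<Rightarrow> real" where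
  "tinner T x z = inner (T x) z"

definition tnorm2 :: "('a::real_inner \<Rightarrow> 'a) \<Rightarrow> 'a \<Rightarrow> real" where
  "tnorm2 T x = inner (T x) x"

definition tdist2 :: "('a::real_inner \<Rightarrow> 'a) \<Rightarrow> 'a \<Rightarrow> 'a set \<Rightarrow> real" where
  "tdist2 T z A = (INF u\<in>A. tnorm2 T (z - u))"

definition self_adjoint_op :: "('a::real_inner \<Rightarrow> 'a) \<Rightarrow> bool" where
  "self_adjoint_op T \<longleftrightarrow> (\<forall>x y. inner (T x) y = inner x (T y))"

definition op_ge :: "('a::real_inner \<Rightarrow> 'a) \<Rightarrow> ('a \<Rightarrow> 'a) \<Rightarrow> bool" where
  "op_ge T S \<longleftrightarrow> (\<forall>x. inner (T x - S x) x \<ge> 0)"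

definition zeros :: "('a::real_inner \<Rightarrow> 'a set) \<Rightarrow> 'a set" where
  "zeros H = {u. 0 \<in> H u}"

end

theory Submission
  imports Defs
begin

text \<open>Write \<open>q = -M(u' - u)\<close> for the element of \<open>Ht(u')\<close> given by the implicit step
  \<open>u \<mapsto> u'\<close>. Substituting it into the \<open>\<Delta>\<close>-estimate and expanding \<open>\<parallel>u - c\<parallel>\<^sup>2\<close> in the
  \<open>ZM\<close>-norm by the three-point identity bounds \<open>\<parallel>u' - c\<parallel>\<^sup>2\<close> in the \<open>Z'M' - ZP\<close>-norm,
  plus \<open>\<delta>\<parallel>u' - u\<parallel>\<^sup>2\<close>, by \<open>\<parallel>u - c\<parallel>\<^sup>2 + 2\<Delta>\<close> for every zero \<open>c\<close> of \<open>H\<close>. Taking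
  infima over \<open>c\<close> and invoking the partial error bound yields
  \<open>dist\<^sup>2(u', H\<^sup>-\<^sup>1(0)) \<le> dist\<^sup>2(u, H\<^sup>-\<^sup>1(0)) + 2\<Delta>\<close> in the successive metrics, which
  telescopes.\<close>

lemma tnorm2_three_point:
  assumes "linear T" "self_adjoint_op T"
  shows "tnorm2 T (b - c) = tnorm2 T (a - c) - 2 * tinner T (a - b) (a - c) + tnorm2 T (a - b)"
proof -
  have "b - c = (a - c) - (a - b)" by simp
  moreover have "inner (T (a - c)) (a - b) = inner (T (a - b)) (a - c)"
    using assms(2) by (simp add: self_adjoint_op_def inner_commute)
  ultimately show ?thesis
    using linear_diff[OF assms(1), of "a - c" "a - b"]
    by (simp only: tnorm2_def tinner_def) (simp add: inner_diff_left inner_diff_right)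
qed

lemma tdist2_le_tnorm2:
  assumes "op_ge T (\<lambda>x. 0)" "c \<in> A"
  shows "tdist2 T z A \<le> tnorm2 T (z - c)"
  unfolding tdist2_def
proof (rule cINF_lower)
  show "bdd_below ((\<lambda>v. tnorm2 T (z - v)) ` A)"
    using assms(1) by (intro bdd_belowI2[of _ 0]) (simp add: op_ge_def tnorm2_def)
qed (fact assms(2))

lemma tdist2_greatest:
  assumes "A \<noteq> {}" "\<And>c. c \<in> A \<Longrightarrow> r \<le> tnorm2 T (z - c)"
  shows "r \<le> tdist2 T z A"
  unfolding tdist2_def using assms by (rule cINF_greatest)

lemma implicit_step_pointwise:
  fixes Z M P Z' M' :: "'a::real_inner \<Rightarrow> 'a"
  assumes "linear Z" "linear M" "self_adjoint_op (Z \<circ> M)"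
    and step: "q + M (a - b) = 0"
    and est: "(1 - \<delta>) / 2 * tnorm2 (Z \<circ> M) (a - b)
              + 1/2 * tnorm2 (\<lambda>x. Z (M x + P x) - Z' (M' x)) (a - c)
              + tinner Z q (a - c) \<ge> - \<Delta>"
  shows "tnorm2 (\<lambda>x. Z' (M' x) - Z (P x)) (a - c) + \<delta> * tnorm2 (Z \<circ> M) (a - b) - 2 * \<Delta>
    \<le> tnorm2 (Z \<circ> M) (b - c)"
proof -
  have "linear (Z \<circ> M)" using assms(2,1) by (rule linear_compose)
  then have three_point: "tnorm2 (Z \<circ> M) (b - c)
      = tnorm2 (Z \<circ> M) (a - c) - 2 * tinner (Z \<circ> M) (a - b) (a - c) + tnorm2 (Z \<circ> M) (a - b)"
    using assms(3) by (rule tnorm2_three_point)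
  have "q = - M (a - b)" using step by (simp add: eq_neg_iff_add_eq_0)
  then have "tinner Z q (a - c) = - tinner (Z \<circ> M) (a - b) (a - c)"
    using linear_neg[OF assms(1)] by (simp add: tinner_def)
  moreover have "tnorm2 (\<lambda>x. Z (M x + P x) - Z' (M' x)) (a - c)
      = tnorm2 (Z \<circ> M) (a - c) - tnorm2 (\<lambda>x. Z' (M' x) - Z (P x)) (a - c)"
    using linear_add[OF assms(1)] by (simp add: tnorm2_def inner_diff_left inner_add_left)
  ultimately show ?thesis using est three_point by (simp add: field_simps)
qed

lemma implicit_step_tdist2:
  fixes Z M P Z' M' :: "'a::real_inner \<Rightarrow> 'a"
  assumes "linear Z" "linear M" "self_adjoint_op (Z \<circ> M)"
    and ge: "op_ge (Z' \<circ> M') (Z \<circ> P)"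
    and "S \<noteq> {}"
    and q: "q \<in> Q" "q + M (a - b) = 0"
    and est: "\<And>c q. c \<in> S \<Longrightarrow> q \<in> Q \<Longrightarrow>
              (1 - \<delta>) / 2 * tnorm2 (Z \<circ> M) (a - b)
              + 1/2 * tnorm2 (\<lambda>x. Z (M x + P x) - Z' (M' x)) (a - c)
              + tinner Z q (a - c) \<ge> - \<Delta>"
    and peb: "\<delta> * tnorm2 (Z \<circ> M) (a - b) + tdist2 (\<lambda>x. Z' (M' x) - Z (P x)) a S
              \<ge> tdist2 (Z' \<circ> M') a S"
  shows "tdist2 (Z' \<circ> M') a S \<le> tdist2 (Z \<circ> M) b S + 2 * \<Delta>"
proof -
  have "op_ge (\<lambda>x. Z' (M' x) - Z (P x)) (\<lambda>x. 0)"
    using ge by (simp add: op_ge_def)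
  then have "tdist2 (\<lambda>x. Z' (M' x) - Z (P x)) a S + \<delta> * tnorm2 (Z \<circ> M) (a - b) - 2 * \<Delta>
      \<le> tdist2 (Z \<circ> M) b S"
  proof (intro tdist2_greatest[OF \<open>S \<noteq> {}\<close>])
    fix c assume "c \<in> S"
    then have "tdist2 (\<lambda>x. Z' (M' x) - Z (P x)) a S \<le> tnorm2 (\<lambda>x. Z' (M' x) - Z (P x)) (a - c)"
      by (intro tdist2_le_tnorm2 \<open>op_ge _ (\<lambda>x. 0)\<close>)
    moreover have "tnorm2 (\<lambda>x. Z' (M' x) - Z (P x)) (a - c) + \<delta> * tnorm2 (Z \<circ> M) (a - b) - 2 * \<Delta>
        \<le> tnorm2 (Z \<circ> M) (b - c)"
      using assms(1-3) q(2) est[OF \<open>c \<in> S\<close> q(1)] by (rule implicit_step_pointwise)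
    ultimately show "tdist2 (\<lambda>x. Z' (M' x) - Z (P x)) a S + \<delta> * tnorm2 (Z \<circ> M) (a - b) - 2 * \<Delta>
        \<le> tnorm2 (Z \<circ> M) (b - c)" by linarith
  qed
  with peb show ?thesis by linarith
qed

lemma telescoping_le:
  fixes d e :: "nat \<Rightarrow> 'b::ordered_comm_monoid_add"
  assumes "\<And>i. d (Suc i) \<le> d i + e i"
  shows "d n \<le> d 0 + (\<Sum>i<n. e i)"
proof (induction n)
  case (Suc n)
  have "d (Suc n) \<le> d n + e n" by (fact assms)
  also have "\<dots> \<le> d 0 + (\<Sum>i<n. e i) + e n" using Suc.IH by (rule add_right_mono)
  finally show ?case by (simp add: add.assoc)
qed simp

theorem corollary3p11:
  fixes H :: "'a::{real_inner, complete_space} \<Rightarrow> 'a set"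
    and Ht :: "nat \<Rightarrow> 'a \<Rightarrow> 'a set"
    and M Z P :: "nat \<Rightarrow> 'a \<Rightarrow> 'a"
    and u :: "nat \<Rightarrow> 'a"
    and \<delta> :: real
    and \<Delta> :: "nat \<Rightarrow> real"
  assumes Hne: "zeros H \<noteq> {}"
    and lin: "\<And>i. bounded_linear (M (i+1)) \<and> bounded_linear (Z (i+1)) \<and> bounded_linear (P (i+1))"
    and sa: "\<And>i. self_adjoint_op (Z (i+1) \<circ> M (i+1))"
    and pos: "\<And>i. op_ge (Z (i+1) \<circ> M (i+1)) (\<lambda>x. 0)"
    and iter: "\<And>i. 0 \<in> (\<lambda>h. h + M (i+1) (u (i+1) - u i)) ` Ht (i+1) (u (i+1))"
    and \<delta>: "0 \<le> \<delta>" "\<delta> \<le> 1"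
    and ge: "\<And>i. op_ge (Z (i+2) \<circ> M (i+2)) (Z (i+1) \<circ> P (i+1))"
    and peb: "\<And>i. \<delta> * tnorm2 (Z (i+1) \<circ> M (i+1)) (u (i+1) - u i)
              + tdist2 (\<lambda>x. Z (i+2) (M (i+2) x) - Z (i+1) (P (i+1) x)) (u (i+1)) (zeros H)
              \<ge> tdist2 (Z (i+2) \<circ> M (i+2)) (u (i+1)) (zeros H)"
    and Delta: "\<And>i ustar q. ustar \<in> zeros H \<Longrightarrow> q \<in> Ht (i+1) (u (i+1)) \<Longrightarrow>
              (1 - \<delta>) / 2 * tnorm2 (Z (i+1) \<circ> M (i+1)) (u (i+1) - u i)
              + 1/2 * tnorm2 (\<lambda>x. Z (i+1) (M (i+1) x + P (i+1) x) - Z (i+2) (M (i+2) x)) (u (i+1) - ustar)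
              + tinner (Z (i+1)) q (u (i+1) - ustar) \<ge> - \<Delta> (i+1)"
  shows "\<And>N. N \<ge> 1 \<Longrightarrow>
     1/2 * tdist2 (Z (N+1) \<circ> M (N+1)) (u N) (zeros H)
     \<le> 1/2 * tdist2 (Z 1 \<circ> M 1) (u 0) (zeros H) + (\<Sum>i<N. \<Delta> (i+1))"
proof -
  define d where "d i = tdist2 (Z (i+1) \<circ> M (i+1)) (u i) (zeros H)" for i
  have "d (Suc i) \<le> d i + 2 * \<Delta> (i+1)" for i
  proof -
    obtain q where "q \<in> Ht (i+1) (u (i+1))" "q + M (i+1) (u (i+1) - u i) = 0"
      using iter[of i] by auto
    with lin[of i] have "tdist2 (Z (i+2) \<circ> M (i+2)) (u (i+1)) (zeros H)
        \<le> d i + 2 * \<Delta> (i+1)"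
      unfolding d_def
      by (intro implicit_step_tdist2[OF _ _ sa ge Hne _ _ Delta peb])
        (auto intro: bounded_linear.linear)
    then show ?thesis by (simp add: d_def)
  qed
  then have telescoped: "d N \<le> d 0 + (\<Sum>i<N. 2 * \<Delta> (i+1))" for N
    by (rule telescoping_le)
  show "1/2 * tdist2 (Z (N+1) \<circ> M (N+1)) (u N) (zeros H)
     \<le> 1/2 * tdist2 (Z 1 \<circ> M 1) (u 0) (zeros H) + (\<Sum>i<N. \<Delta> (i+1))" for N
    using telescoped[of N] by (simp add: d_def flip: sum_distrib_left)
qed

end
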